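(* Let $(J,\mathcal F)$, $b^S,w^S_j$, $P(\mathcal F)$ be as in the context with $P(\mathcal F)$ an $\mathcal F$-extended polymatroid, and let $\mathbf c$ be $\mathcal F$-admissible, with $\mathrm{AG}_2$ on input $\mathbf c$ producing $\boldsymbol\pi,\boldsymbol\nu$ and $S_k=\{\pi_k,\dots,\pi_n\}$. Define $c^{S_1}_j=c_j$ ($j\in J$) and $c^{S_k}_j=c^{S_{k-1}}_j-\frac{c^{S_{k-1}}_{\pi_{k-1}}}{w^{S_{k-1}}_{\pi_{k-1}}}[w^{S_{k-1}}_j-w^{S_k}_j]$ for $j\in S_k$, $2\le k\le n$, and let $v^{\mathrm{LP}}=\min\{\sum_jc_jx_j:\mathbf x\in P(\mathcal F)\}$. Then for $1\le m\le n-1$, $$v^{\mathrm{LP}}=\sum_{k=1}^m\nu_{\pi_k}\,[b^{S_k}-b^{S_{k+1}}]+\sum_{j\in S_{m+1}}c^{S_{m+1}}_j\,x^{\boldsymbol\pi}_j.$$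
   Context: $J$ finite, $|J|=n$; $\mathcal F\subseteq2^J$ with $\emptyset\in\mathcal F$, each nonempty $S\in\mathcal F$ having nonempty $\partial^-S=\{j\in S:S\setminus\{j\}\in\mathcal F\}$, each $S\in\mathcal F\ne J$ having $j\notin S$ with $S\cup\{j\}\in\mathcal F$. Full $\mathcal F$-string: ordering $\boldsymbol\pi$ of $J$ with $\{\pi_k,\dots,\pi_n\}\in\mathcal F$ for all $k$. Given $b^S\ge0$, $w^S_j>0$: $P(\mathcal F)=\{\mathbf x\ge0:\sum_{j\in S}w^S_jx_j\ge b^S\ (S\in\mathcal F\setminus\{J\}),\ \sum_{j\in J}w^J_jx_j=b^J\}$; $\mathbf x^{\boldsymbol\pi}$ is the unique solution of $\sum_{l=k}^nw^{S_k}_{\pi_l}x_{\pi_l}=b^{S_k}$ ($1\le k\le n$); $P(\mathcal F)$ is an $\mathcal F$-extended polymatroid if $\mathbf x^{\boldsymbol\pi}\in P(\mathcal F)$ for every full $\mathcal F$-string. $\mathrm{AG}_2$ on input $\mathbf c$: $S_1=J$, $\nu^{S_1}_j=c_j/w^{S_1}_j$, $\pi_1\in\arg\min\{\nu^{S_1}_j:j\in\partial^-S_1\}$, $\nu_{\pi_1}=\nu^{S_1}_{\pi_1}$; for $k=2..n$: $S_k=S_{k-1}\setminus\{\pi_{k-1}\}$, $\nu^{S_k}_j=\nu^{S_{k-1}}_j+(w^{S_{k-1}}_j/w^{S_k}_j-1)[\nu^{S_{k-1}}_j-\nu^{S_{k-1}}_{\pi_{k-1}}]$ ($j\in S_k$),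 $\pi_k\in\arg\min\{\nu^{S_k}_j:j\in\partial^-S_k\}$, $\nu_{\pi_k}=\nu^{S_k}_{\pi_k}$. $\mathbf c$ is $\mathcal F$-admissible if $\nu_{\pi_1}\le\cdots\le\nu_{\pi_n}$. *)

theory Defs
  imports Main "HOL-Library.FuncSet" Complex_Main
begin

definition lower_bd :: "'a set set \<Rightarrow> 'a set \<Rightarrow> 'a set" where
  "lower_bd F S = {j \<in> S. S - {j} \<in> F}"

definition feasible_family :: "'a set \<Rightarrow> 'a set set \<Rightarrow> bool" where
  "feasible_family J F \<longleftrightarrow> finite J \<and> F \<subseteq> Pow J \<and> {} \<in> F
     \<and> (\<forall>S\<in>F. S \<noteq> {} \<longrightarrow> lower_bd F S \<noteq> {})
     \<and> (\<forall>S\<in>F. S \<noteq> J \<longrightarrow> (\<exists>j. j \<notin> S \<and> j \<in> J \<and> insert j S \<in> F))"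

definition Sk :: "(nat \<Rightarrow> 'a) \<Rightarrow> nat \<Rightarrow> nat \<Rightarrow> 'a set" where
  "Sk \<pi> n k = \<pi> ` {k..n}"

definition full_string :: "'a set \<Rightarrow> 'a set set \<Rightarrow> (nat \<Rightarrow> 'a) \<Rightarrow> bool" where
  "full_string J F \<pi> \<longleftrightarrow> bij_betw \<pi> {1..card J} J
     \<and> (\<forall>k\<in>{1..card J}. Sk \<pi> (card J) k \<in> F)"

definition polyP :: "'a set \<Rightarrow> 'a set set \<Rightarrow> ('a set \<Rightarrow> real) \<Rightarrow> ('a set \<Rightarrow> 'a \<Rightarrow> real)
    \<Rightarrow> ('a \<Rightarrow> real) set" where
  "polyP J F b w = {x. (\<forall>j\<in>J. 0 \<le> x j)
      \<and> (\<forall>S\<in>F - {J}. (\<Sum>j\<in>S. w S j * x j) \<ge> b S)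
      \<and> (\<Sum>j\<in>J. w J j * x j) = b J}"

definition xpi :: "'a set \<Rightarrow> ('a set \<Rightarrow> real) \<Rightarrow> ('a set \<Rightarrow> 'a \<Rightarrow> real) \<Rightarrow> (nat \<Rightarrow> 'a)
    \<Rightarrow> ('a \<Rightarrow> real)" where
  "xpi J b w \<pi> = (THE x. (\<forall>k\<in>{1..card J}.
        (\<Sum>l=k..card J. w (Sk \<pi> (card J) k) (\<pi> l) * x (\<pi> l)) = b (Sk \<pi> (card J) k))
      \<and> (\<forall>j. j \<notin> J \<longrightarrow> x j = 0))"

definition ext_polymatroid :: "'a set \<Rightarrow> 'a set set \<Rightarrow> ('a set \<Rightarrow> real) \<Rightarrow> ('a set \<Rightarrow> 'a \<Rightarrow> real) \<Rightarrow> bool" where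
  "ext_polymatroid J F b w \<longleftrightarrow> (\<forall>\<pi>. full_string J F \<pi> \<longrightarrow> xpi J b w \<pi> \<in> polyP J F b w)"

text \<open>Indices nu^{S_k}_j of algorithm AG_2 along the ordering pi (argument k is the step, k >= 1;
  value at k = 0 is a dummy copy of step 1).\<close>

fun agnu :: "('a set \<Rightarrow> 'a \<Rightarrow> real) \<Rightarrow> ('a \<Rightarrow> real) \<Rightarrow> (nat \<Rightarrow> 'a) \<Rightarrow> nat \<Rightarrow> nat \<Rightarrow> 'a \<Rightarrow> real" where
  "agnu w c \<pi> n 0 j = c j / w (Sk \<pi> n 1) j"
| "agnu w c \<pi> n (Suc 0) j = c j / w (Sk \<pi> n 1) j"
| "agnu w c \<pi> n (Suc (Suc k)) j =
     agnu w c \<pi> n (Suc k) j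
     + (w (Sk \<pi> n (Suc k)) j / w (Sk \<pi> n (Suc (Suc k))) j - 1)
       * (agnu w c \<pi> n (Suc k) j - agnu w c \<pi> n (Suc k) (\<pi> (Suc k)))"

text \<open>pi is a possible output ordering of AG_2 on input c (ties broken arbitrarily).\<close>

definition AG2_run :: "'a set \<Rightarrow> 'a set set \<Rightarrow> ('a set \<Rightarrow> 'a \<Rightarrow> real) \<Rightarrow> ('a \<Rightarrow> real)
    \<Rightarrow> (nat \<Rightarrow> 'a) \<Rightarrow> bool" where
  "AG2_run J F w c \<pi> \<longleftrightarrow> bij_betw \<pi> {1..card J} J
     \<and> (\<forall>k\<in>{1..card J}. \<pi> k \<in> lower_bd F (Sk \<pi> (card J) k)
          \<and> (\<forall>j\<in>lower_bd F (Sk \<pi> (card J) k).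
               agnu w c \<pi> (card J) k (\<pi> k) \<le> agnu w c \<pi> (card J) k j))"

definition AG2_nu :: "'a set \<Rightarrow> ('a set \<Rightarrow> 'a \<Rightarrow> real) \<Rightarrow> ('a \<Rightarrow> real) \<Rightarrow> (nat \<Rightarrow> 'a) \<Rightarrow> nat \<Rightarrow> real" where
  "AG2_nu J w c \<pi> k = agnu w c \<pi> (card J) k (\<pi> k)"

definition admissible_run :: "'a set \<Rightarrow> 'a set set \<Rightarrow> ('a set \<Rightarrow> 'a \<Rightarrow> real) \<Rightarrow> ('a \<Rightarrow> real)
    \<Rightarrow> (nat \<Rightarrow> 'a) \<Rightarrow> bool" where
  "admissible_run J F w c \<pi> \<longleftrightarrow> AG2_run J F w c \<pi>
     \<and> (\<forall>k\<in>{1..<card J}. AG2_nu J w c \<pi> k \<le> AG2_nu J w c \<pi> (Suc k))"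

fun redc :: "('a set \<Rightarrow> 'a \<Rightarrow> real) \<Rightarrow> ('a \<Rightarrow> real) \<Rightarrow> (nat \<Rightarrow> 'a) \<Rightarrow> nat \<Rightarrow> nat \<Rightarrow> 'a \<Rightarrow> real" where
  "redc w c \<pi> n 0 j = c j"
| "redc w c \<pi> n (Suc 0) j = c j"
| "redc w c \<pi> n (Suc (Suc k)) j =
     redc w c \<pi> n (Suc k) j
     - redc w c \<pi> n (Suc k) (\<pi> (Suc k)) / w (Sk \<pi> n (Suc k)) (\<pi> (Suc k))
       * (w (Sk \<pi> n (Suc k)) j - w (Sk \<pi> n (Suc (Suc k))) j)"

definition vLP :: "'a set \<Rightarrow> 'a set set \<Rightarrow> ('a set \<Rightarrow> real) \<Rightarrow> ('a set \<Rightarrow> 'a \<Rightarrow> real)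
    \<Rightarrow> ('a \<Rightarrow> real) \<Rightarrow> real" where
  "vLP J F b w c = Inf ((\<lambda>x. \<Sum>j\<in>J. c j * x j) ` polyP J F b w)"

end

theory Submission
  imports Defs
begin

(* Write A_k(x) = sum_{j in S_k} w^{S_k}_j x_j for the left-hand side of the constraint of S_k.
   By induction on k the reduced costs are c^{S_k}_j = nu^{S_k}_j w^{S_k}_j, so one step of their
   recursion splits sum_{j in S_k} c^{S_k}_j x_j into nu_{pi_k} (A_k(x) - A_{k+1}(x)) plus the
   corresponding sum over S_{k+1}.  Telescoping gives, for every x,
     c x = sum_{k<=m} nu_{pi_k} (A_k(x) - A_{k+1}(x)) + sum_{j in S_{m+1}} c^{S_{m+1}}_j x_j.
   For m = n, summation by parts rewrites the right-hand side as
   nu_{pi_1} A_1(x) + sum_{k>=2} (nu_{pi_k} - nu_{pi_{k-1}}) A_k(x).  Admissibility makes these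
   coefficients nonnegative, while on P(F) we have A_1(x) = b^J and A_k(x) >= b^{S_k}, with equality
   throughout for x^pi; hence x^pi is optimal, and evaluating the identity at x^pi gives the claim. *)

lemma feasible_family_ground_set:
  assumes "feasible_family J F"
  shows "J \<in> F"
proof -
  have fin: "finite J" and sub: "F \<subseteq> Pow J" and empty: "{} \<in> F"
    and ext: "\<And>S. S \<in> F \<Longrightarrow> S \<noteq> J \<Longrightarrow> \<exists>j. j \<notin> S \<and> j \<in> J \<and> insert j S \<in> F"
    using assms unfolding feasible_family_def by auto
  have "J \<in> F" if "S \<in> F" for S
    using that
  proof (induction "card (J - S)" arbitrary: S)
    case 0
    with fin sub have "S = J" by auto
    with 0 show ?case by simp
  next
    case (Suc d)
    then obtain j where j: "j \<notin> S" "j \<in> J" "insert j S \<in> F"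
      using ext by fastforce
    have "J - insert j S = (J - S) - {j}" by auto
    with Suc.hyps(2) fin j have "d = card (J - insert j S)" by simp
    with Suc.hyps(1) j show ?case by blast
  qed
  with empty show ?thesis by blast
qed

lemma upper_triangular_system_solvable:
  fixes a :: "nat \<Rightarrow> nat \<Rightarrow> real"
  assumes "\<And>k. k \<in> {m..n} \<Longrightarrow> a k k \<noteq> 0"
  shows "\<exists>y. \<forall>k\<in>{m..n}. (\<Sum>l=k..n. a k l * y l) = r k"
  using assms
proof (induction "Suc n - m" arbitrary: m)
  case 0
  then show ?case by auto
next
  case (Suc d)
  then obtain y where y: "\<forall>k\<in>{Suc m..n}. (\<Sum>l=k..n. a k l * y l) = r k"
    by fastforce
  define y' where "y' = y(m := (r m - (\<Sum>l=Suc m..n. a m l * y l)) / a m m)"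
  have m: "m \<le> n" using Suc.hyps(2) by simp
  have tail: "(\<Sum>l=k..n. a i l * y' l) = (\<Sum>l=k..n. a i l * y l)" if "Suc m \<le> k" for i k
    using that by (intro sum.cong) (auto simp: y'_def)
  have "(\<Sum>l=k..n. a k l * y' l) = r k" if k: "k \<in> {m..n}" for k
  proof (cases "k = m")
    case True
    have "(\<Sum>l=m..n. a m l * y' l) = a m m * y' m + (\<Sum>l=Suc m..n. a m l * y l)"
      using m tail by (simp add: sum.atLeast_Suc_atMost)
    with True Suc.prems m show ?thesis by (simp add: y'_def)
  next
    case False
    with k y tail show ?thesis by simp
  qed
  then show ?case by blast
qed

lemma upper_triangular_system_unique:
  fixes a :: "nat \<Rightarrow> nat \<Rightarrow> real"
  assumes "\<And>k. k \<in> {m..n} \<Longrightarrow> a k k \<noteq> 0"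
    and "\<And>k. k \<in> {m..n} \<Longrightarrow> (\<Sum>l=k..n. a k l * y l) = r k"
    and "\<And>k. k \<in> {m..n} \<Longrightarrow> (\<Sum>l=k..n. a k l * z l) = r k"
  shows "\<forall>k\<in>{m..n}. y k = z k"
  using assms
proof (induction "Suc n - m" arbitrary: m)
  case 0
  then show ?case by auto
next
  case (Suc d)
  then have m: "m \<le> n" by simp
  have tail: "\<forall>k\<in>{Suc m..n}. y k = z k"
    by (intro Suc.hyps(1)) (use Suc.hyps(2) Suc.prems in auto)
  have "a m m * y m + (\<Sum>l=Suc m..n. a m l * y l) = a m m * z m + (\<Sum>l=Suc m..n. a m l * z l)"
    using Suc.prems(2,3)[of m] m by (simp add: sum.atLeast_Suc_atMost)
  moreover have "(\<Sum>l=Suc m..n. a m l * y l) = (\<Sum>l=Suc m..n. a m l * z l)"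
    using tail by simp
  ultimately have "y m = z m" using Suc.prems(1)[of m] m by simp
  with tail m show ?case by (simp add: Icc_eq_insert_lb_nat)
qed

lemma sum_weighted_differences_mono:
  fixes \<nu> A B :: "nat \<Rightarrow> real"
  assumes \<nu>_mono: "\<And>k. 1 \<le> k \<Longrightarrow> k < n \<Longrightarrow> \<nu> k \<le> \<nu> (Suc k)"
    and first: "A 1 = B 1" and last: "A (Suc n) = B (Suc n)"
    and le: "\<And>k. 2 \<le> k \<Longrightarrow> k \<le> n \<Longrightarrow> B k \<le> A k"
  shows "(\<Sum>k=1..n. \<nu> k * (B k - B (Suc k))) \<le> (\<Sum>k=1..n. \<nu> k * (A k - A (Suc k)))"
proof -
  define d where "d k = A k - B k" for k
  have partial: "- \<nu> i * d (Suc i) \<le> (\<Sum>k=1..i. \<nu> k * (d k - d (Suc k)))" if "i \<le> n" for i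
    using that
  proof (induction i)
    case 0
    then show ?case using first by (simp add: d_def)
  next
    case (Suc i)
    have "0 \<le> (\<nu> (Suc i) - \<nu> i) * d (Suc i)"
    proof (cases "i = 0")
      case True
      then show ?thesis using first by (simp add: d_def)
    next
      case False
      then show ?thesis using \<nu>_mono[of i] le[of "Suc i"] Suc.prems by (simp add: d_def)
    qed
    with Suc show ?case by (simp add: algebra_simps)
  qed
  have "(\<Sum>k=1..n. \<nu> k * (A k - A (Suc k))) - (\<Sum>k=1..n. \<nu> k * (B k - B (Suc k)))
      = (\<Sum>k=1..n. \<nu> k * (d k - d (Suc k)))"
    by (simp add: d_def sum_subtractf[symmetric] algebra_simps)
  with partial[of n] last show ?thesis by (simp add: d_def)
qed

locale AG2_setting =
  fixes J :: "'a set" and F :: "'a set set" and w :: "'a set \<Rightarrow> 'a \<Rightarrow> real"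
    and c :: "'a \<Rightarrow> real" and \<pi> :: "nat \<Rightarrow> 'a"
  assumes fam: "feasible_family J F"
    and w_pos: "\<And>S j. S \<in> F \<Longrightarrow> j \<in> S \<Longrightarrow> 0 < w S j"
    and run: "AG2_run J F w c \<pi>"
begin

abbreviation "n \<equiv> card J"
abbreviation "S k \<equiv> Sk \<pi> n k"
abbreviation "\<nu> k \<equiv> AG2_nu J w c \<pi> k"

lemma bij: "bij_betw \<pi> {1..n} J"
  using run unfolding AG2_run_def by blast

lemma pivot_lower_bd: "1 \<le> k \<Longrightarrow> k \<le> n \<Longrightarrow> \<pi> k \<in> lower_bd F (S k)"
  using run unfolding AG2_run_def by simp

lemma inj: "inj_on \<pi> {1..n}"
  using bij bij_betw_imp_inj_on by blast

lemma S_1: "S 1 = J"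
  using bij unfolding Sk_def bij_betw_def by blast

lemma S_Suc_n: "S (Suc n) = {}"
  unfolding Sk_def by simp

lemma S_Suc_subset: "S (Suc k) \<subseteq> S k"
  unfolding Sk_def by auto

lemma S_insert: "1 \<le> k \<Longrightarrow> k \<le> n \<Longrightarrow> S k = insert (\<pi> k) (S (Suc k))"
  unfolding Sk_def by (metis Icc_eq_insert_lb_nat image_insert)

lemma pivot_notin_S_Suc: "1 \<le> k \<Longrightarrow> k \<le> n \<Longrightarrow> \<pi> k \<notin> S (Suc k)"
  unfolding Sk_def using inj by (subst inj_on_image_mem_iff[of _ "{1..n}"]) auto

lemma S_neq_J: "2 \<le> k \<Longrightarrow> k \<le> n \<Longrightarrow> S k \<noteq> J"
proof
  assume k: "2 \<le> k" "k \<le> n" and "S k = J"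
  then have "\<pi> 1 \<in> \<pi> ` {k..n}" using bij bij_betwE unfolding Sk_def by fastforce
  with k inj show False by (subst (asm) inj_on_image_mem_iff[of _ "{1..n}"]) auto
qed

lemma S_in_F:
  assumes "1 \<le> k" "k \<le> Suc n"
  shows "S k \<in> F"
  using assms(1)
proof (induction k rule: dec_induct)
  case base
  then show ?case using S_1 feasible_family_ground_set[OF fam] by simp
next
  case (step i)
  then have "\<pi> i \<in> lower_bd F (S i)" using pivot_lower_bd assms(2) by simp
  then have "S i - {\<pi> i} \<in> F" unfolding lower_bd_def by blast
  moreover have "S i - {\<pi> i} = S (Suc i)"
    using S_insert[of i] pivot_notin_S_Suc[of i] step.hyps assms(2) by auto
  ultimately show ?case by simp
qed

lemma w_S_pos:
  assumes "1 \<le> k" and j: "j \<in> S k"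
  shows "0 < w (S k) j"
proof -
  from j have "k \<le> n" unfolding Sk_def by auto
  with assms show ?thesis using S_in_F w_pos by simp
qed

lemma full_string: "full_string J F \<pi>"
  unfolding full_string_def using bij S_in_F by auto

lemma redc_eq_agnu_mult:
  "1 \<le> k \<Longrightarrow> j \<in> S k \<Longrightarrow> redc w c \<pi> n k j = agnu w c \<pi> n k j * w (S k) j"
proof (induction k arbitrary: j rule: dec_induct)
  case base
  then show ?case using w_S_pos[of 1 j] by simp
next
  case (step i)
  have j: "j \<in> S i" using step.prems S_Suc_subset by blast
  have "Suc i \<le> n" using step.prems unfolding Sk_def by auto
  then have p: "\<pi> i \<in> S i" using step.hyps S_insert[of i] by auto
  show ?case
    using step.hyps step.IH[OF j] step.IH[OF p]
      w_S_pos[of i j] w_S_pos[of "Suc i" j] w_S_pos[of i "\<pi> i"] j p step.prems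
    by (cases i) (auto simp: field_simps)
qed

lemma pivot_redc: "1 \<le> k \<Longrightarrow> k \<le> n \<Longrightarrow> redc w c \<pi> n k (\<pi> k) = \<nu> k * w (S k) (\<pi> k)"
  using redc_eq_agnu_mult[of k "\<pi> k"] S_insert[of k] unfolding AG2_nu_def by simp

lemma redc_Suc:
  assumes "1 \<le> k" "k \<le> n"
  shows "redc w c \<pi> n (Suc k) j = redc w c \<pi> n k j - \<nu> k * (w (S k) j - w (S (Suc k)) j)"
proof -
  have "0 < w (S k) (\<pi> k)" using assms w_S_pos[of k "\<pi> k"] S_insert[of k] by auto
  with pivot_redc[OF assms] have "redc w c \<pi> n k (\<pi> k) / w (S k) (\<pi> k) = \<nu> k" by simp
  moreover obtain i where "k = Suc i" using assms by (cases k) auto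
  ultimately show ?thesis by simp
qed

definition wsum :: "('a \<Rightarrow> real) \<Rightarrow> nat \<Rightarrow> real" where
  "wsum x k = (\<Sum>j\<in>S k. w (S k) j * x j)"

lemma sum_redc_Suc:
  assumes k: "1 \<le> k" "k \<le> n"
  shows "(\<Sum>j\<in>S k. redc w c \<pi> n k j * x j)
    = \<nu> k * (wsum x k - wsum x (Suc k)) + (\<Sum>j\<in>S (Suc k). redc w c \<pi> n (Suc k) j * x j)"
proof -
  let ?T = "S (Suc k)"
  have fin: "finite ?T" unfolding Sk_def by simp
  have split: "(\<Sum>j\<in>S k. f j) = f (\<pi> k) + (\<Sum>j\<in>?T. f j)" for f :: "'a \<Rightarrow> real"
    using S_insert[OF k] pivot_notin_S_Suc[OF k] fin by simp
  have "(\<Sum>j\<in>?T. redc w c \<pi> n k j * x j)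
      = (\<Sum>j\<in>?T. \<nu> k * (w (S k) j * x j) - \<nu> k * (w ?T j * x j)
                     + redc w c \<pi> n (Suc k) j * x j)"
    by (intro sum.cong refl) (simp add: redc_Suc[OF k] algebra_simps del: redc.simps)
  then have "(\<Sum>j\<in>S k. redc w c \<pi> n k j * x j)
      = \<nu> k * w (S k) (\<pi> k) * x (\<pi> k)
        + (\<Sum>j\<in>?T. \<nu> k * (w (S k) j * x j) - \<nu> k * (w ?T j * x j)
                     + redc w c \<pi> n (Suc k) j * x j)"
    using split pivot_redc[OF k] by (simp del: redc.simps)
  also have "\<dots> = \<nu> k * (w (S k) (\<pi> k) * x (\<pi> k) + (\<Sum>j\<in>?T. w (S k) j * x j))
        - \<nu> k * (\<Sum>j\<in>?T. w ?T j * x j) + (\<Sum>j\<in>?T. redc w c \<pi> n (Suc k) j * x j)"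
    by (simp add: sum.distrib sum_subtractf sum_distrib_left algebra_simps)
  finally show ?thesis unfolding wsum_def split[of "\<lambda>j. w (S k) j * x j"] by (simp add: algebra_simps)
qed

lemma cost_decomposition:
  "m \<le> n \<Longrightarrow> (\<Sum>j\<in>J. c j * x j)
    = (\<Sum>k=1..m. \<nu> k * (wsum x k - wsum x (Suc k)))
      + (\<Sum>j\<in>S (Suc m). redc w c \<pi> n (Suc m) j * x j)"
proof (induction m)
  case 0
  then show ?case using S_1 by simp
next
  case (Suc m)
  then show ?case using sum_redc_Suc[of "Suc m" x] by (simp del: redc.simps)
qed

lemma cost_telescoped: "(\<Sum>j\<in>J. c j * x j) = (\<Sum>k=1..n. \<nu> k * (wsum x k - wsum x (Suc k)))"
  using cost_decomposition[of n x] S_Suc_n by simp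

lemma wsum_eq_sum_upto: "1 \<le> k \<Longrightarrow> wsum x k = (\<Sum>l=k..n. w (S k) (\<pi> l) * x (\<pi> l))"
  unfolding wsum_def Sk_def using inj by (subst sum.reindex) (auto intro: inj_on_subset)

lemma ex1_xpi_system:
  "\<exists>!x. (\<forall>k\<in>{1..n}. (\<Sum>l=k..n. w (S k) (\<pi> l) * x (\<pi> l)) = b (S k))
      \<and> (\<forall>j. j \<notin> J \<longrightarrow> x j = 0)"
    (is "\<exists>!x. ?solves x")
proof -
  let ?a = "\<lambda>k l. w (S k) (\<pi> l)"
  have diag: "?a k k \<noteq> 0" if "k \<in> {1..n}" for k
    using that w_S_pos[of k "\<pi> k"] S_insert[of k] by auto
  obtain y where y: "\<forall>k\<in>{1..n}. (\<Sum>l=k..n. ?a k l * y l) = b (S k)"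
    using upper_triangular_system_solvable[where m=1 and n=n and a="?a" and r="\<lambda>k. b (S k)"] diag
    by blast
  define x where "x j = (if j \<in> J then y (the_inv_into {1..n} \<pi> j) else 0)" for j
  have x_\<pi>: "x (\<pi> l) = y l" if "l \<in> {1..n}" for l
    using that bij inj the_inv_into_f_f bij_betwE unfolding x_def by fastforce
  have "?solves x"
  proof (intro conjI ballI allI impI)
    fix k
    assume k: "k \<in> {1..n}"
    then have "(\<Sum>l=k..n. ?a k l * x (\<pi> l)) = (\<Sum>l=k..n. ?a k l * y l)"
      using x_\<pi> by (intro sum.cong) auto
    with y k show "(\<Sum>l=k..n. ?a k l * x (\<pi> l)) = b (S k)" by simp
  qed (simp add: x_def)
  moreover have "x' = x" if "?solves x'" for x'
  proof
    fix j
    show "x' j = x j"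
    proof (cases "j \<in> J")
      case True
      then obtain l where l: "l \<in> {1..n}" "j = \<pi> l" using bij unfolding bij_betw_def by blast
      have "\<forall>l\<in>{1..n}. x' (\<pi> l) = y l"
        using upper_triangular_system_unique[where m=1 and n=n and a="?a"
            and y="\<lambda>l. x' (\<pi> l)" and z=y and r="\<lambda>k. b (S k)"] diag that y by auto
      with l x_\<pi> show ?thesis by simp
    next
      case False
      with that show ?thesis by (simp add: x_def)
    qed
  qed
  ultimately show ?thesis by blast
qed

lemma wsum_xpi: "1 \<le> k \<Longrightarrow> k \<le> n \<Longrightarrow> wsum (xpi J b w \<pi>) k = b (S k)"
  using theI'[OF ex1_xpi_system] unfolding xpi_def by (simp add: wsum_eq_sum_upto)

lemma xpi_minimizes_cost:
  assumes adm: "admissible_run J F w c \<pi>" and x: "x \<in> polyP J F b w"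
  shows "(\<Sum>j\<in>J. c j * xpi J b w \<pi> j) \<le> (\<Sum>j\<in>J. c j * x j)"
proof (cases "n = 0")
  case True
  then show ?thesis using bij by (simp add: bij_betw_def)
next
  case False
  have \<nu>_mono: "\<nu> k \<le> \<nu> (Suc k)" if "1 \<le> k" "k < n" for k
    using adm that unfolding admissible_run_def by simp
  have first: "wsum x 1 = wsum (xpi J b w \<pi>) 1"
    using x False S_1 wsum_xpi[of 1] unfolding polyP_def wsum_def by simp
  have last: "wsum x (Suc n) = wsum (xpi J b w \<pi>) (Suc n)"
    unfolding wsum_def S_Suc_n by simp
  have "wsum (xpi J b w \<pi>) k \<le> wsum x k" if "2 \<le> k" "k \<le> n" for k
  proof -
    have "S k \<in> F - {J}" using S_in_F[of k] S_neq_J[of k] that by simp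
    with x have "b (S k) \<le> wsum x k" unfolding polyP_def wsum_def by blast
    with that show ?thesis using wsum_xpi[of k] by simp
  qed
  with \<nu>_mono first last show ?thesis
    unfolding cost_telescoped[of x] cost_telescoped[of "xpi J b w \<pi>"]
    by (rule sum_weighted_differences_mono)
qed

end

theorem proposition1:
  fixes J :: "'a set" and F :: "'a set set"
    and b :: "'a set \<Rightarrow> real" and w :: "'a set \<Rightarrow> 'a \<Rightarrow> real"
    and c :: "'a \<Rightarrow> real" and \<pi> :: "nat \<Rightarrow> 'a" and m :: nat
  assumes fam: "feasible_family J F"
    and b_nonneg: "\<And>S. S \<in> F \<Longrightarrow> 0 \<le> b S"
    and w_pos: "\<And>S j. S \<in> F \<Longrightarrow> j \<in> S \<Longrightarrow> 0 < w S j"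
    and poly: "ext_polymatroid J F b w"
    and adm: "admissible_run J F w c \<pi>"
    and m: "1 \<le> m" "m \<le> card J - 1"
  shows "vLP J F b w c =
    (\<Sum>k=1..m. AG2_nu J w c \<pi> k * (b (Sk \<pi> (card J) k) - b (Sk \<pi> (card J) (Suc k))))
    + (\<Sum>j\<in>Sk \<pi> (card J) (Suc m). redc w c \<pi> (card J) (Suc m) j * xpi J b w \<pi> j)"
proof -
  interpret AG2_setting J F w c \<pi>
    using fam w_pos adm unfolding admissible_run_def by unfold_locales auto
  let ?x = "xpi J b w \<pi>"
  have mn: "Suc m \<le> n" using m by simp
  have "?x \<in> polyP J F b w"
    using poly full_string unfolding ext_polymatroid_def by blast
  then have "vLP J F b w c = (\<Sum>j\<in>J. c j * ?x j)"
    unfolding vLP_def using xpi_minimizes_cost[OF adm] by (intro cInf_eq_minimum) auto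
  also have "\<dots> = (\<Sum>k=1..m. \<nu> k * (wsum ?x k - wsum ?x (Suc k)))
      + (\<Sum>j\<in>S (Suc m). redc w c \<pi> n (Suc m) j * ?x j)"
    using cost_decomposition[of m ?x] mn by (simp del: redc.simps)
  also have "(\<Sum>k=1..m. \<nu> k * (wsum ?x k - wsum ?x (Suc k)))
      = (\<Sum>k=1..m. \<nu> k * (b (S k) - b (S (Suc k))))"
    using mn by (intro sum.cong) (simp_all add: wsum_xpi)
  finally show ?thesis .
qed

end
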